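(* The class of data languages accepted by SAFA is not closed under reversal: there exists a data language $L$ accepted by some SAFA such that no SAFA accepts $L^R=\{(a_n,d_n)\cdots(a_1,d_1): (a_1,d_1)\cdots(a_n,d_n)\in L\}$.
   Context: $D$ is a fixed countably infinite set of data values; for a finite alphabet $\Sigma$, data words are elements of $(\Sigma\times D)^*$. A set augmented finite automaton (SAFA) is a tuple $M=(Q,\Sigma\times D,q_0,F,H,\delta)$: $Q$ finite set of states, $q_0\in Q$ initial, $F\subseteq Q$ final, $H=\{h_1,\dots,h_m\}$ a finite collection of (names of) sets of data values, $\delta\subseteq Q\times\Sigma\times C\times OP\times Q$ with $C=\{p(h_i),\,!p(h_i): h_i\in H\}$, $OP=\{-\}\cup\{\mathsf{ins}(h_i):h_i\in H\}$. Configurations are $(q,\langle S_1,\dots,S_m\rangle)$ with $S_i\subseteq D$ finite; initially state $q_0$ and all sets empty. On reading $(a,d)$, a transition $(q,a,\alpha,op,q')$ from the current state may be taken if $\alpha=p(h_i)$ and $d\in S_i$, or $\alpha=\,!p(h_i)$ and $d\notin S_i$; then the state becomes $q'$ and if $op=\mathsf{ins}(h_j)$ the value $d$ is added to $S_j$ ($op=-$ changes nothing). A word is accepted if some run reads it entirely and ends in $F$; $L(M)$ is the set of accepted words. *)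

theory Defs
  imports Main "HOL-Library.Countable"
begin

(* Conditions p(h_i) and !p(h_i), operations - and ins(h_i).
   Set names h_1..h_m are represented by indices 0..<m. *)
datatype cond = P nat | NP nat
datatype oper = Nop | Ins nat

(* SAFA M = (Q, Sigma x D, q0, F, H, delta); states are natural numbers,
   letters are natural numbers (Sigma a finite set of them),
   H = {h_0, ..., h_(m-1)} is given by its size m. *)
record safa =
  states :: "nat set"
  alphabet :: "nat set"
  init :: nat
  final :: "nat set"
  nsets :: nat
  trans :: "(nat \<times> nat \<times> cond \<times> oper \<times> nat) set"

definition well_formed :: "safa \<Rightarrow> bool" where
  "well_formed M \<longleftrightarrow> finite (states M) \<and> finite (alphabet M) \<and>
     init M \<in> states M \<and> final M \<subseteq> states M \<and>
     (\<forall>(q,a,c,op,q') \<in> trans M. q \<in> states M \<and> a \<in> alphabet M \<and> q' \<in> states M \<and>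
        (case c of P i \<Rightarrow> i < nsets M | NP i \<Rightarrow> i < nsets M) \<and>
        (case op of Nop \<Rightarrow> True | Ins j \<Rightarrow> j < nsets M))"

type_synonym 'd config = "nat \<times> (nat \<Rightarrow> 'd set)"

fun sat :: "cond \<Rightarrow> (nat \<Rightarrow> 'd set) \<Rightarrow> 'd \<Rightarrow> bool" where
  "sat (P i) S d = (d \<in> S i)"
| "sat (NP i) S d = (d \<notin> S i)"

fun apply_op :: "oper \<Rightarrow> (nat \<Rightarrow> 'd set) \<Rightarrow> 'd \<Rightarrow> (nat \<Rightarrow> 'd set)" where
  "apply_op Nop S d = S"
| "apply_op (Ins j) S d = S(j := insert d (S j))"

definition step :: "safa \<Rightarrow> 'd config \<Rightarrow> nat \<times> 'd \<Rightarrow> 'd config \<Rightarrow> bool" where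
  "step M c ad c' \<longleftrightarrow> (\<exists>cnd op q'. (fst c, fst ad, cnd, op, q') \<in> trans M \<and>
       sat cnd (snd c) (snd ad) \<and> c' = (q', apply_op op (snd c) (snd ad)))"

fun run :: "safa \<Rightarrow> 'd config \<Rightarrow> (nat \<times> 'd) list \<Rightarrow> 'd config \<Rightarrow> bool" where
  "run M c [] c' = (c' = c)"
| "run M c (x # w) c' = (\<exists>c''. step M c x c'' \<and> run M c'' w c')"

definition accepts :: "safa \<Rightarrow> (nat \<times> 'd) list \<Rightarrow> bool" where
  "accepts M w \<longleftrightarrow> (\<exists>c'. run M (init M, \<lambda>_. {}) w c' \<and> fst c' \<in> final M)"

definition lang :: "safa \<Rightarrow> (nat \<times> 'd) list set" where
  "lang M = {w. set (map fst w) \<subseteq> alphabet M \<and> accepts M w}"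

definition rev_lang :: "'x list set \<Rightarrow> 'x list set" where
  "rev_lang L = rev ` L"

end

theory Submission
  imports Defs
begin

(* The automaton store_check_safa stores the data of a block of 0-letters in its only set and
   then checks that every datum of a following block of 1-letters was stored; so a word u v
   with 0-block u and 1-block v lies in L iff the data of v occur in u.

   Suppose an SAFA M' with m sets accepts L^R, and let it read m + 1 distinct data
   e_1 ... e_(m+1) as 1-letters followed by the same data as 0-letters. Follow the accepting
   run through the 0-block. A step that tests a datum negatively could equally read a fresh
   datum; a step that tests membership in a set already holding a datum that does not occur
   later in the block could equally read that datum. Such a substitution does not affect the
   rest of the run, because the membership of the later data in the sets is unchanged.
   Any other step tests a set that afterwards holds the current datum, which does not occur
   later, and with only m sets this happens at most m times. Hence M' also accepts a word
   whose 0-block misses some e_i, a word not in L^R. *)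

lemma ex_distinct_list_of_length:
  assumes "infinite (UNIV :: 'a set)"
  obtains xs :: "'a list" where "distinct xs" and "length xs = n"
proof -
  obtain B :: "'a set" where "finite B" and "card B = n"
    using infinite_arbitrarily_large[OF assms] by blast
  moreover obtain xs where "set xs = B" and "distinct xs"
    using finite_distinct_list[OF \<open>finite B\<close>] by blast
  ultimately show ?thesis
    using that[of xs] distinct_card[of xs] by simp
qed

lemma run_append: "run M c (u @ v) c' \<longleftrightarrow> (\<exists>c''. run M c u c'' \<and> run M c'' v c')"
  by (induction u arbitrary: c) auto

lemma step_sets_bounds:
  assumes "step M (q, S) x (q', S')"
  shows "S l \<subseteq> S' l" and "S' l \<subseteq> insert (snd x) (S l)"
proof -
  from assms obtain op where "S' = apply_op op S (snd x)"
    by (auto simp: step_def)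
  then show "S l \<subseteq> S' l" and "S' l \<subseteq> insert (snd x) (S l)"
    by (cases op; auto)+
qed

lemma run_sets_mono: "run M (q, S) v (q', S') \<Longrightarrow> S l \<subseteq> S' l"
  by (induction v arbitrary: q S) (fastforce dest: step_sets_bounds)+

lemma run_sets_subset: "run M (q, S) v (q', S') \<Longrightarrow> S' l \<subseteq> S l \<union> snd ` set v"
  by (induction v arbitrary: q S) (fastforce dest: step_sets_bounds)+

lemma run_transfer_sets:
  assumes "run M (q, S) v (q', S')" and "\<forall>l. \<forall>d\<in>snd ` set v. d \<in> S l \<longleftrightarrow> d \<in> T l"
  shows "\<exists>T'. run M (q, T) v (q', T')"
  using assms
proof (induction v arbitrary: q S T)
  case Nil
  then show ?case by simp
next
  case (Cons x v)
  from Cons.prems(1) obtain q2 cnd op where tr: "(q, fst x, cnd, op, q2) \<in> trans M"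
    and "sat cnd S (snd x)" and r: "run M (q2, apply_op op S (snd x)) v (q', S')"
    by (auto simp: step_def)
  moreover have "snd x \<in> S l \<longleftrightarrow> snd x \<in> T l" for l
    using Cons.prems(2) by simp
  ultimately have "sat cnd T (snd x)"
    by (cases cnd) simp_all
  with tr have st: "step M (q, T) x (q2, apply_op op T (snd x))"
    by (auto simp: step_def)
  have "\<forall>l. \<forall>d\<in>snd ` set v. d \<in> apply_op op S (snd x) l \<longleftrightarrow> d \<in> apply_op op T (snd x) l"
    using Cons.prems(2) by (cases op) auto
  then obtain T' where "run M (q2, apply_op op T (snd x)) v (q', T')"
    using Cons.IH[OF r] by blast
  with st show ?case by auto
qed

lemma run_block_substitute_head:
  assumes "(q, a, cnd, op, q2) \<in> trans M" and "sat cnd S y"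
    and "run M (q2, apply_op op S x) (map (Pair a) xs) (q', S')"
    and "distinct (x # xs)" and "y \<notin> set (x # xs)"
  shows "\<exists>ys S''. run M (q, S) (map (Pair a) ys) (q', S'') \<and> \<not> set (x # xs) \<subseteq> set ys"
proof -
  have "\<forall>l. \<forall>d\<in>snd ` set (map (Pair a) xs). d \<in> apply_op op S x l \<longleftrightarrow> d \<in> apply_op op S y l"
    using assms(4,5) by (cases op) auto
  from run_transfer_sets[OF assms(3) this]
  obtain S'' where "run M (q2, apply_op op S y) (map (Pair a) xs) (q', S'')" ..
  moreover have "step M (q, S) (a, y) (q2, apply_op op S y)"
    using assms(1,2) by (auto simp: step_def)
  ultimately have "run M (q, S) (map (Pair a) (y # xs)) (q', S'')"
    by auto
  moreover have "\<not> set (x # xs) \<subseteq> set (y # xs)"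
    using assms(4,5) by auto
  ultimately show ?thesis by blast
qed

lemma well_formed_P_index: "well_formed M \<Longrightarrow> (q, a, P l, op, q') \<in> trans M \<Longrightarrow> l < nsets M"
  unfolding well_formed_def by fastforce

lemma run_block_missing_datum:
  assumes "well_formed M"
    and "run M (q, S) (map (Pair a) xs) (q', S')" and "distinct xs"
    and "z \<notin> set xs" and "\<forall>l. z \<notin> S l"
    and "A \<subseteq> {..<nsets M}" and "\<forall>l\<in>A. \<not> S l \<subseteq> set xs"
    and "nsets M < card A + length xs"
  shows "\<exists>ys S''. run M (q, S) (map (Pair a) ys) (q', S'') \<and> \<not> set xs \<subseteq> set ys"
  using assms(2-)
proof (induction xs arbitrary: q S A)
  case Nil
  then have "card A \<le> nsets M"
    using card_mono[of "{..<nsets M}" A] by simp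
  with Nil.prems(7) show ?case by simp
next
  case (Cons x xs)
  from Cons.prems(1) obtain q2 cnd op where tr: "(q, a, cnd, op, q2) \<in> trans M"
    and sat: "sat cnd S x" and r: "run M (q2, apply_op op S x) (map (Pair a) xs) (q', S')"
    by (auto simp: step_def)
  consider (negative) l where "cnd = NP l" | (witnessed) l where "cnd = P l" "l \<in> A"
    | (new) l where "cnd = P l" "l \<notin> A"
    by (cases cnd) auto
  then show ?case
  proof cases
    case negative
    with Cons.prems(2-4) show ?thesis
      by (intro run_block_substitute_head[OF tr _ r]) auto
  next
    case witnessed
    with Cons.prems(6) obtain y where "y \<in> S l" "y \<notin> set (x # xs)"
      by auto
    with witnessed Cons.prems(2) show ?thesis
      by (intro run_block_substitute_head[OF tr _ r]) auto
  next
    case new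
    let ?S2 = "apply_op op S x"
    have st: "step M (q, S) (a, x) (q2, ?S2)"
      using tr sat by (auto simp: step_def)
    have "l < nsets M"
      using well_formed_P_index[OF assms(1)] tr new(1) by blast
    with Cons.prems(5,7) new(2) finite_subset[OF Cons.prems(5)]
    have A2: "insert l A \<subseteq> {..<nsets M}" and card: "nsets M < card (insert l A) + length xs"
      by auto
    have witnesses: "\<forall>l'\<in>insert l A. \<not> ?S2 l' \<subseteq> set xs"
      using Cons.prems(2,6) sat new(1) step_sets_bounds(1)[OF st] by fastforce
    have z_fresh: "\<forall>l'. z \<notin> ?S2 l'"
      using Cons.prems(3,4) step_sets_bounds(2)[OF st] by fastforce
    from Cons.IH[OF r _ _ z_fresh A2 witnesses card] Cons.prems(2,3)
    obtain ys S'' where "run M (q2, ?S2) (map (Pair a) ys) (q', S'')" and "\<not> set xs \<subseteq> set ys"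
      by auto
    with st Cons.prems(2) show ?thesis
      by (intro exI[of _ "x # ys"]) auto
  qed
qed

lemma lang_block_missing_datum:
  fixes u :: "(nat \<times> 'd) list"
  assumes "infinite (UNIV :: 'd set)" and "well_formed M"
    and "u @ map (Pair a) xs \<in> lang M" and "distinct xs" and "nsets M < length xs"
  shows "\<exists>ys. u @ map (Pair a) ys \<in> lang M \<and> \<not> set xs \<subseteq> set ys"
proof -
  from assms(3) obtain q' S' where "run M (init M, \<lambda>_. {}) (u @ map (Pair a) xs) (q', S')"
    and fin: "q' \<in> final M"
    by (auto simp: lang_def accepts_def)
  then obtain q S where pre: "run M (init M, \<lambda>_. {}) u (q, S)"
    and blk: "run M (q, S) (map (Pair a) xs) (q', S')"
    unfolding run_append by auto
  obtain z where z: "z \<notin> set xs \<union> snd ` set u"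
    using ex_new_if_finite[OF assms(1), of "set xs \<union> snd ` set u"] by auto
  with run_sets_subset[OF pre] have "\<forall>l. z \<notin> S l"
    by blast
  with run_block_missing_datum[OF assms(2) blk assms(4), of z "{}"] z assms(5)
  obtain ys S'' where "run M (q, S) (map (Pair a) ys) (q', S'')"
    and missing: "\<not> set xs \<subseteq> set ys"
    by auto
  with pre fin have "accepts M (u @ map (Pair a) ys)"
    unfolding accepts_def run_append by auto
  moreover have "set (map fst (u @ map (Pair a) ys)) \<subseteq> alphabet M"
  proof -
    obtain x where "x \<in> set xs"
      using assms(5) by (cases xs) auto
    with assms(3) have "a \<in> alphabet M" and "set (map fst u) \<subseteq> alphabet M"
      by (force simp: lang_def)+
    then show ?thesis by auto
  qed
  ultimately show ?thesis
    using missing unfolding lang_def by blast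
qed

definition store_check_safa :: safa where
  "store_check_safa = \<lparr>states = {0,1}, alphabet = {0,1}, init = 0, final = {0,1}, nsets = 1,
     trans = {(0,0,P 0,Ins 0,0), (0,0,NP 0,Ins 0,0), (0,1,P 0,Nop,1), (1,1,P 0,Nop,1)}\<rparr>"

lemma well_formed_store_check_safa: "well_formed store_check_safa"
  by (auto simp: store_check_safa_def well_formed_def)

lemma run_store_check_stores_block:
  "run store_check_safa (0, S) (map (Pair 0) xs) (0, S(0 := S 0 \<union> set xs))"
proof (induction xs arbitrary: S)
  case Nil
  then show ?case by simp
next
  case (Cons x xs)
  define T where "T = S(0 := insert x (S 0))"
  have "step store_check_safa (0, S) (0, x) (0, T)"
    by (cases "x \<in> S 0") (auto simp: T_def step_def store_check_safa_def intro!: exI[of _ "Ins 0"])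
  moreover have "T(0 := T 0 \<union> set xs) = S(0 := S 0 \<union> set (x # xs))"
    by (auto simp: T_def)
  with Cons.IH[of T] have "run store_check_safa (0, T) (map (Pair 0) xs) (0, S(0 := S 0 \<union> set (x # xs)))"
    by metis
  ultimately show ?case
    unfolding list.map run.simps(2) by blast
qed

lemma run_store_check_checks_block:
  "q \<in> {0, 1} \<Longrightarrow> set ys \<subseteq> S 0 \<Longrightarrow> \<exists>q'\<in>{0, 1}. run store_check_safa (q, S) (map (Pair 1) ys) (q', S)"
proof (induction ys arbitrary: q)
  case Nil
  then show ?case by auto
next
  case (Cons y ys)
  then have "step store_check_safa (q, S) (1, y) (1, S)"
    by (auto simp: step_def store_check_safa_def intro!: exI[of _ "P 0"] exI[of _ Nop])
  moreover obtain q' where "q' \<in> {0, 1}" and "run store_check_safa (1, S) (map (Pair 1) ys) (q', S)"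
    using Cons.IH[of 1] Cons.prems(2) by auto
  ultimately show ?case
    unfolding list.map run.simps(2) by blast
qed

lemma run_store_check_invariant:
  "run store_check_safa (q, S) v (q', S') \<Longrightarrow>
     S' 0 \<subseteq> S 0 \<union> {d. (0, d) \<in> set v} \<and> (\<forall>d. (1, d) \<in> set v \<longrightarrow> d \<in> S' 0)"
proof (induction v arbitrary: q S)
  case Nil
  then show ?case by simp
next
  case (Cons x v)
  then obtain q2 S2 where st: "step store_check_safa (q, S) x (q2, S2)"
    and r: "run store_check_safa (q2, S2) v (q', S')"
    by auto
  from st have "fst x = 0 \<and> S2 0 \<subseteq> insert (snd x) (S 0) \<or> fst x = 1 \<and> S2 = S \<and> snd x \<in> S 0"
    by (auto simp: step_def store_check_safa_def)
  with Cons.IH[OF r] run_sets_mono[OF r, of 0] show ?case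
    by (cases x) auto
qed

lemma lang_store_check_blocks:
  "map (Pair 0) u @ map (Pair 1) v \<in> lang store_check_safa \<longleftrightarrow> set v \<subseteq> set u"
proof
  assume "map (Pair 0) u @ map (Pair 1) v \<in> lang store_check_safa"
  then obtain q' S' where "run store_check_safa (0, \<lambda>_. {}) (map (Pair 0) u @ map (Pair 1) v) (q', S')"
    by (auto simp: lang_def accepts_def store_check_safa_def)
  from run_store_check_invariant[OF this] show "set v \<subseteq> set u"
    by auto
next
  assume "set v \<subseteq> set u"
  then obtain q' where q': "q' \<in> {0, 1}"
    and "run store_check_safa (0, (\<lambda>_. {})(0 := set u)) (map (Pair 1) v) (q', (\<lambda>_. {})(0 := set u))"
    using run_store_check_checks_block[of 0 v "(\<lambda>_. {})(0 := set u)"] by auto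
  with run_store_check_stores_block[of "\<lambda>_. {}" u]
  have "run store_check_safa (0, \<lambda>_. {}) (map (Pair 0) u @ map (Pair 1) v) (q', (\<lambda>_. {})(0 := set u))"
    unfolding run_append by auto
  with q' show "map (Pair 0) u @ map (Pair 1) v \<in> lang store_check_safa"
    by (auto simp: lang_def accepts_def store_check_safa_def)
qed

lemma rev_lang_iff: "w \<in> rev_lang L \<longleftrightarrow> rev w \<in> L"
  by (force simp: rev_lang_def)

theorem theorem8:
  assumes "infinite (UNIV :: 'd set)"
  shows "\<exists>M. well_formed M \<and>
           (\<forall>M'. well_formed M' \<longrightarrow> lang M' \<noteq> rev_lang (lang M :: (nat \<times> 'd::countable) list set))"
proof (intro exI conjI allI impI)
  show "well_formed store_check_safa"
    by (rule well_formed_store_check_safa)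
  fix M' :: safa
  assume wf: "well_formed M'"
  show "lang M' \<noteq> rev_lang (lang store_check_safa :: (nat \<times> 'd) list set)"
  proof
    assume rev_eq: "lang M' = rev_lang (lang store_check_safa :: (nat \<times> 'd) list set)"
    have blocks_in_M': "map (Pair 1) es @ map (Pair 0) ys \<in> lang M' \<longleftrightarrow> set es \<subseteq> set ys"
      for es ys :: "'d list"
      using lang_store_check_blocks[of "rev ys" "rev es"] by (simp add: rev_eq rev_lang_iff rev_map)
    obtain es :: "'d list" where "distinct es" and "length es = Suc (nsets M')"
      using ex_distinct_list_of_length[OF assms] .
    moreover have "map (Pair 1) es @ map (Pair 0) es \<in> lang M'"
      using blocks_in_M' by blast
    ultimately obtain ys where "map (Pair 1) es @ map (Pair 0) ys \<in> lang M'"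
      and "\<not> set es \<subseteq> set ys"
      using lang_block_missing_datum[OF assms wf, of "map (Pair 1) es" 0 es] by auto
    with blocks_in_M' show False
      by blast
  qed
qed

end
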